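(* No free adequate semigroup or free adequate monoid on a non-empty set is finitely generated as a semigroup or monoid (i.e. using multiplication only).
   Context: For a semigroup $S$ let $S^1=S$ if $S$ is a monoid and otherwise $S$ with an identity adjoined. $a\,\mathcal{L}^*\,b$ iff for all $x,y\in S^1$: $ax=ay\Leftrightarrow bx=by$; $a\,\mathcal{R}^*\,b$ iff for all $x,y\in S^1$: $xa=ya\Leftrightarrow xb=yb$. $S$ is adequate if its idempotents commute and every $\mathcal{L}^*$-class and every $\mathcal{R}^*$-class contains an idempotent (necessarily unique); $x^+$ is the idempotent $\mathcal{R}^*$-related to $x$, $x^*$ the idempotent $\mathcal{L}^*$-related to $x$. Adequate semigroups [monoids] are viewed as $(2,1,1)$-algebras [$(2,1,1,0)$-algebras], morphisms preserving all operations. The free adequate semigroup [monoid] on a set $\Sigma$ is an adequate semigroup [monoid] containing $\Sigma$ such that every map from $\Sigma$ to an adequate semigroup [monoid] extends uniquely to a morphism. *)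

theory Defs
  imports Main
begin

text \<open>S^1 is modelled by the option type: None is the adjoined identity.
  (If S is already a monoid, adjoining a formal identity does not change
  the relations L* and R*, since multiplying by it behaves like the identity.)\<close>

fun ract :: "('a \<Rightarrow> 'a \<Rightarrow> 'a) \<Rightarrow> 'a \<Rightarrow> 'a option \<Rightarrow> 'a" where
  "ract m a None = a"
| "ract m a (Some x) = m a x"

fun lact :: "('a \<Rightarrow> 'a \<Rightarrow> 'a) \<Rightarrow> 'a option \<Rightarrow> 'a \<Rightarrow> 'a" where
  "lact m None a = a"
| "lact m (Some x) a = m x a"

definition one_adj :: "'a set \<Rightarrow> 'a option set" where
  "one_adj S = insert None (Some ` S)"

definition Lstar :: "'a set \<Rightarrow> ('a \<Rightarrow> 'a \<Rightarrow> 'a) \<Rightarrow> 'a \<Rightarrow> 'a \<Rightarrow> bool" where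
  "Lstar S m a b \<longleftrightarrow> (\<forall>x\<in>one_adj S. \<forall>y\<in>one_adj S.
      (ract m a x = ract m a y) \<longleftrightarrow> (ract m b x = ract m b y))"

definition Rstar :: "'a set \<Rightarrow> ('a \<Rightarrow> 'a \<Rightarrow> 'a) \<Rightarrow> 'a \<Rightarrow> 'a \<Rightarrow> bool" where
  "Rstar S m a b \<longleftrightarrow> (\<forall>x\<in>one_adj S. \<forall>y\<in>one_adj S.
      (lact m x a = lact m y a) \<longleftrightarrow> (lact m x b = lact m y b))"

text \<open>Adequate semigroup viewed as a (2,1,1)-algebra (S, mult, +, * ):
  idempotents commute, a+ is the idempotent R*-related to a,
  a* the idempotent L*-related to a.\<close>

definition adequate_semigroup ::
  "'a set \<Rightarrow> ('a \<Rightarrow> 'a \<Rightarrow> 'a) \<Rightarrow> ('a \<Rightarrow> 'a) \<Rightarrow> ('a \<Rightarrow> 'a) \<Rightarrow> bool" where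
  "adequate_semigroup S m p st \<longleftrightarrow>
     (\<forall>a\<in>S. \<forall>b\<in>S. m a b \<in> S) \<and>
     (\<forall>a\<in>S. \<forall>b\<in>S. \<forall>c\<in>S. m (m a b) c = m a (m b c)) \<and>
     (\<forall>e\<in>S. \<forall>f\<in>S. m e e = e \<and> m f f = f \<longrightarrow> m e f = m f e) \<and>
     (\<forall>a\<in>S. p a \<in> S \<and> m (p a) (p a) = p a \<and> Rstar S m a (p a)) \<and>
     (\<forall>a\<in>S. st a \<in> S \<and> m (st a) (st a) = st a \<and> Lstar S m a (st a))"

definition adequate_monoid ::
  "'a set \<Rightarrow> ('a \<Rightarrow> 'a \<Rightarrow> 'a) \<Rightarrow> ('a \<Rightarrow> 'a) \<Rightarrow> ('a \<Rightarrow> 'a) \<Rightarrow> 'a \<Rightarrow> bool" where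
  "adequate_monoid S m p st e \<longleftrightarrow>
     adequate_semigroup S m p st \<and> e \<in> S \<and> (\<forall>a\<in>S. m e a = a \<and> m a e = a)"

definition adequate_hom ::
  "'a set \<Rightarrow> ('a \<Rightarrow> 'a \<Rightarrow> 'a) \<Rightarrow> ('a \<Rightarrow> 'a) \<Rightarrow> ('a \<Rightarrow> 'a) \<Rightarrow>
   'b set \<Rightarrow> ('b \<Rightarrow> 'b \<Rightarrow> 'b) \<Rightarrow> ('b \<Rightarrow> 'b) \<Rightarrow> ('b \<Rightarrow> 'b) \<Rightarrow> ('a \<Rightarrow> 'b) \<Rightarrow> bool" where
  "adequate_hom S m p st T m' p' st' h \<longleftrightarrow>
     (\<forall>a\<in>S. h a \<in> T) \<and>
     (\<forall>a\<in>S. \<forall>b\<in>S. h (m a b) = m' (h a) (h b)) \<and>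
     (\<forall>a\<in>S. h (p a) = p' (h a)) \<and>
     (\<forall>a\<in>S. h (st a) = st' (h a))"

definition adequate_monoid_hom ::
  "'a set \<Rightarrow> ('a \<Rightarrow> 'a \<Rightarrow> 'a) \<Rightarrow> ('a \<Rightarrow> 'a) \<Rightarrow> ('a \<Rightarrow> 'a) \<Rightarrow> 'a \<Rightarrow>
   'b set \<Rightarrow> ('b \<Rightarrow> 'b \<Rightarrow> 'b) \<Rightarrow> ('b \<Rightarrow> 'b) \<Rightarrow> ('b \<Rightarrow> 'b) \<Rightarrow> 'b \<Rightarrow> ('a \<Rightarrow> 'b) \<Rightarrow> bool" where
  "adequate_monoid_hom S m p st e T m' p' st' e' h \<longleftrightarrow>
     adequate_hom S m p st T m' p' st' h \<and> h e = e'"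

text \<open>HOL cannot quantify over types inside a formula, so the target algebras
  range over all adequate semigroups (monoids) whose carrier lies in the type
  'a list; this type is infinite and at least as large as 'a, hence large
  enough to contain an isomorphic copy of the genuine free object on \<Sigma>
  (of cardinality max(|\<Sigma>|, aleph_0)) and of S itself, so the property
  characterises S up to isomorphism exactly as the unrestricted one.\<close>

definition free_adequate_semigroup ::
  "'a set \<Rightarrow> 'a set \<Rightarrow> ('a \<Rightarrow> 'a \<Rightarrow> 'a) \<Rightarrow> ('a \<Rightarrow> 'a) \<Rightarrow> ('a \<Rightarrow> 'a) \<Rightarrow> bool" where
  "free_adequate_semigroup \<Sigma> S m p st \<longleftrightarrow>
     adequate_semigroup S m p st \<and> \<Sigma> \<subseteq> S \<and>
     (\<forall>(T :: 'a list set) m' p' st'. adequate_semigroup T m' p' st' \<longrightarrow>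
        (\<forall>f. f ` \<Sigma> \<subseteq> T \<longrightarrow>
           (\<exists>h. adequate_hom S m p st T m' p' st' h \<and> (\<forall>x\<in>\<Sigma>. h x = f x)) \<and>
           (\<forall>h1 h2. adequate_hom S m p st T m' p' st' h1 \<and> (\<forall>x\<in>\<Sigma>. h1 x = f x) \<and>
                    adequate_hom S m p st T m' p' st' h2 \<and> (\<forall>x\<in>\<Sigma>. h2 x = f x)
                    \<longrightarrow> (\<forall>a\<in>S. h1 a = h2 a))))"

definition free_adequate_monoid ::
  "'a set \<Rightarrow> 'a set \<Rightarrow> ('a \<Rightarrow> 'a \<Rightarrow> 'a) \<Rightarrow> ('a \<Rightarrow> 'a) \<Rightarrow> ('a \<Rightarrow> 'a) \<Rightarrow> 'a \<Rightarrow> bool" where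
  "free_adequate_monoid \<Sigma> S m p st e \<longleftrightarrow>
     adequate_monoid S m p st e \<and> \<Sigma> \<subseteq> S \<and>
     (\<forall>(T :: 'a list set) m' p' st' e'. adequate_monoid T m' p' st' e' \<longrightarrow>
        (\<forall>f. f ` \<Sigma> \<subseteq> T \<longrightarrow>
           (\<exists>h. adequate_monoid_hom S m p st e T m' p' st' e' h \<and> (\<forall>x\<in>\<Sigma>. h x = f x)) \<and>
           (\<forall>h1 h2. adequate_monoid_hom S m p st e T m' p' st' e' h1 \<and> (\<forall>x\<in>\<Sigma>. h1 x = f x) \<and>
                    adequate_monoid_hom S m p st e T m' p' st' e' h2 \<and> (\<forall>x\<in>\<Sigma>. h2 x = f x)
                    \<longrightarrow> (\<forall>a\<in>S. h1 a = h2 a))))"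

inductive_set sg_gen :: "('a \<Rightarrow> 'a \<Rightarrow> 'a) \<Rightarrow> 'a set \<Rightarrow> 'a set" for m X where
  base: "x \<in> X \<Longrightarrow> x \<in> sg_gen m X"
| mult: "a \<in> sg_gen m X \<Longrightarrow> b \<in> sg_gen m X \<Longrightarrow> m a b \<in> sg_gen m X"

inductive_set mon_gen :: "('a \<Rightarrow> 'a \<Rightarrow> 'a) \<Rightarrow> 'a \<Rightarrow> 'a set \<Rightarrow> 'a set" for m e X where
  base: "x \<in> X \<Longrightarrow> x \<in> mon_gen m e X"
| unit: "e \<in> mon_gen m e X"
| mult: "a \<in> mon_gen m e X \<Longrightarrow> b \<in> mon_gen m e X \<Longrightarrow> m a b \<in> mon_gen m e X"

definition fg_semigroup :: "'a set \<Rightarrow> ('a \<Rightarrow> 'a \<Rightarrow> 'a) \<Rightarrow> bool" where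
  "fg_semigroup S m \<longleftrightarrow> (\<exists>X. finite X \<and> X \<subseteq> S \<and> sg_gen m X = S)"

definition fg_monoid :: "'a set \<Rightarrow> ('a \<Rightarrow> 'a \<Rightarrow> 'a) \<Rightarrow> 'a \<Rightarrow> bool" where
  "fg_monoid S m e \<longleftrightarrow> (\<exists>X. finite X \<and> X \<subseteq> S \<and> mon_gen m e X = S)"

end

theory Submission imports Defs "HOL-Library.Nat_Bijection" begin

text \<open>Send a generator \<open>c\<close> to the element \<open>(1,1)\<close> of the adequate monoid of walks below, where
  \<open>(j,k)\<close> is a walk on \<open>\<nat>\<close> from \<open>0\<close> that ends at \<open>k\<close> and has reached \<open>j\<close>. Then \<open>(c\<^sup>n)\<^sup>+\<close> maps
  to the idempotent \<open>(n,0)\<close>. A product of walks ends at \<open>0\<close> only if every factor does, and then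
  its reach is the maximal reach of the factors; so the idempotents in the image of a finitely
  generated subsemigroup have bounded reach, and no finite set generates the free object.\<close>

lemma image_sg_gen_subset:
  assumes "X \<subseteq> S" and closed: "\<forall>a\<in>S. \<forall>b\<in>S. m a b \<in> S"
    and hom: "\<forall>a\<in>S. \<forall>b\<in>S. h (m a b) = m' (h a) (h b)"
  shows "h ` sg_gen m X \<subseteq> sg_gen m' (h ` X)"
proof -
  have "z \<in> S \<and> h z \<in> sg_gen m' (h ` X)" if "z \<in> sg_gen m X" for z
    using that
  proof induction
    case (base x)
    then show ?case using \<open>X \<subseteq> S\<close> by (auto intro: sg_gen.base)
  next
    case (mult a b)
    then show ?case using closed hom by (auto intro: sg_gen.mult)
  qed
  then show ?thesis by blast
qed

lemma mon_gen_eq_sg_gen_insert: "mon_gen m e X = sg_gen m (insert e X)"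
proof
  show "mon_gen m e X \<subseteq> sg_gen m (insert e X)"
  proof
    fix z assume "z \<in> mon_gen m e X"
    then show "z \<in> sg_gen m (insert e X)"
      by induction (auto intro: sg_gen.intros)
  qed
  show "sg_gen m (insert e X) \<subseteq> mon_gen m e X"
  proof
    fix z assume "z \<in> sg_gen m (insert e X)"
    then show "z \<in> mon_gen m e X"
      by induction (auto intro: mon_gen.intros)
  qed
qed

lemma fg_monoid_imp_fg_semigroup:
  assumes "e \<in> S" and "fg_monoid S m e"
  shows "fg_semigroup S m"
proof -
  obtain X where "finite X" "X \<subseteq> S" "mon_gen m e X = S"
    using assms(2) unfolding fg_monoid_def by blast
  then show ?thesis
    unfolding fg_semigroup_def mon_gen_eq_sg_gen_insert
    using \<open>e \<in> S\<close> by (intro exI[of _ "insert e X"]) auto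
qed

definition walks :: "(nat \<times> nat) set" where
  "walks = {(j, k). k \<le> j}"

fun walk_mult :: "nat \<times> nat \<Rightarrow> nat \<times> nat \<Rightarrow> nat \<times> nat" where
  "walk_mult (j1, k1) (j2, k2) = (max j1 (k1 + j2), k1 + k2)"

fun walk_plus :: "nat \<times> nat \<Rightarrow> nat \<times> nat" where
  "walk_plus (j, k) = (j, 0)"

fun walk_star :: "nat \<times> nat \<Rightarrow> nat \<times> nat" where
  "walk_star (j, k) = (j - k, 0)"

lemma ball_one_adj: "(\<forall>x\<in>one_adj S. P x) \<longleftrightarrow> P None \<and> (\<forall>s\<in>S. P (Some s))"
  by (auto simp: one_adj_def)

lemma adequate_monoid_walks: "adequate_monoid walks walk_mult walk_plus walk_star (0, 0)"
proof -
  have "Rstar walks walk_mult a (walk_plus a)" if "a \<in> walks" for a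
    using that unfolding Rstar_def ball_one_adj walks_def
    by (cases a) (auto simp: split_paired_all)
  moreover have "Lstar walks walk_mult a (walk_star a)" if "a \<in> walks" for a
    using that unfolding Lstar_def ball_one_adj walks_def
    by (cases a) (auto simp: split_paired_all)
  ultimately show ?thesis
    unfolding adequate_monoid_def adequate_semigroup_def
    by (auto simp: walks_def split_paired_all)
qed

lemma sg_gen_walk_mult_reach_le:
  assumes "\<forall>y\<in>Y. fst y \<le> N" and "z \<in> sg_gen walk_mult Y"
  shows "snd z = 0 \<Longrightarrow> fst z \<le> N"
  using assms(2)
proof induction
  case (base x)
  then show ?case using assms(1) by blast
next
  case (mult a b)
  obtain j1 k1 j2 k2 where "a = (j1, k1)" "b = (j2, k2)" by fastforce
  with mult show ?case by auto
qed

lemma not_fg_semigroup_if_walk_hom: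
  assumes closed: "\<forall>a\<in>S. \<forall>b\<in>S. m a b \<in> S" and plus_closed: "\<forall>a\<in>S. p a \<in> S"
    and hom_mult: "\<forall>a\<in>S. \<forall>b\<in>S. \<phi> (m a b) = walk_mult (\<phi> a) (\<phi> b)"
    and hom_plus: "\<forall>a\<in>S. \<phi> (p a) = walk_plus (\<phi> a)"
    and "c \<in> S" and "\<phi> c = (1, 1)"
  shows "\<not> fg_semigroup S m"
proof
  assume "fg_semigroup S m"
  then obtain X where "finite X" "X \<subseteq> S" and gen: "sg_gen m X = S"
    unfolding fg_semigroup_def by blast
  define N where "N = Max (fst ` \<phi> ` X)"
  have bound: "\<forall>y\<in>\<phi> ` X. fst y \<le> N"
    using \<open>finite X\<close> by (simp add: N_def)
  define pow where "pow n = ((\<lambda>x. m x c) ^^ n) c" for n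
  have pow: "pow n \<in> S \<and> \<phi> (pow n) = (Suc n, Suc n)" for n
    by (induction n) (use closed hom_mult \<open>c \<in> S\<close> \<open>\<phi> c = (1, 1)\<close> in \<open>auto simp: pow_def\<close>)
  let ?z = "p (pow N)"
  have "?z \<in> S" using pow plus_closed by blast
  have "\<phi> ?z = (Suc N, 0)" using pow hom_plus by simp
  moreover have "\<phi> ?z \<in> sg_gen walk_mult (\<phi> ` X)"
    using image_sg_gen_subset[OF \<open>X \<subseteq> S\<close> closed hom_mult] \<open>?z \<in> S\<close> gen by blast
  ultimately show False
    using sg_gen_walk_mult_reach_le[OF bound] by fastforce
qed

locale retraction =
  fixes A :: "'b set" and g :: "'b \<Rightarrow> 'c" and d :: "'c \<Rightarrow> 'b"
  assumes d_g: "\<And>x. x \<in> A \<Longrightarrow> d (g x) = x"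
begin

definition copy_op :: "('b \<Rightarrow> 'b \<Rightarrow> 'b) \<Rightarrow> 'c \<Rightarrow> 'c \<Rightarrow> 'c" where
  "copy_op m x y = g (m (d x) (d y))"

definition copy_un :: "('b \<Rightarrow> 'b) \<Rightarrow> 'c \<Rightarrow> 'c" where
  "copy_un u x = g (u (d x))"

lemma g_eq_iff: "x \<in> A \<Longrightarrow> y \<in> A \<Longrightarrow> g x = g y \<longleftrightarrow> x = y"
  by (metis d_g)

lemma copy_op_g [simp]: "x \<in> A \<Longrightarrow> y \<in> A \<Longrightarrow> copy_op m (g x) (g y) = g (m x y)"
  by (simp add: copy_op_def d_g)

lemma copy_un_g [simp]: "x \<in> A \<Longrightarrow> copy_un u (g x) = g (u x)"
  by (simp add: copy_un_def d_g)

lemma ball_image_g: "(\<forall>x\<in>g ` A. P x) \<longleftrightarrow> (\<forall>x\<in>A. P (g x))"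
  by auto

lemma adequate_monoid_copy:
  assumes "adequate_monoid A m p st e"
  shows "adequate_monoid (g ` A) (copy_op m) (copy_un p) (copy_un st) (g e)"
proof -
  have closed: "\<forall>a\<in>A. \<forall>b\<in>A. m a b \<in> A"
    using assms by (simp add: adequate_monoid_def adequate_semigroup_def)
  have "Rstar (g ` A) (copy_op m) (g a) (g b)"
    if "a \<in> A" "b \<in> A" "Rstar A m a b" for a b
    using that closed unfolding Rstar_def ball_one_adj ball_image_g by (simp add: g_eq_iff)
  moreover have "Lstar (g ` A) (copy_op m) (g a) (g b)"
    if "a \<in> A" "b \<in> A" "Lstar A m a b" for a b
    using that closed unfolding Lstar_def ball_one_adj ball_image_g by (simp add: g_eq_iff)
  ultimately show ?thesis
    using assms unfolding adequate_monoid_def adequate_semigroup_def ball_image_g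
    by (simp add: g_eq_iff)
qed

lemma d_hom_into_copy:
  assumes "adequate_semigroup A m' p' st'"
    and "adequate_hom S m p st (g ` A) (copy_op m') (copy_un p') (copy_un st') h"
  shows "\<forall>a\<in>S. \<forall>b\<in>S. d (h (m a b)) = m' (d (h a)) (d (h b))"
    and "\<forall>a\<in>S. d (h (p a)) = p' (d (h a))"
proof -
  have d_h: "d (h a) \<in> A" if "a \<in> S" for a
    using assms(2) that unfolding adequate_hom_def by (auto simp: d_g)
  show "\<forall>a\<in>S. \<forall>b\<in>S. d (h (m a b)) = m' (d (h a)) (d (h b))"
    "\<forall>a\<in>S. d (h (p a)) = p' (d (h a))"
    using assms d_h unfolding adequate_semigroup_def adequate_hom_def
    by (auto simp: copy_op_def copy_un_def d_g)
qed

end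

text \<open>The universal property only ranges over algebras carried by \<open>'a list\<close>, so the walk
  monoid is coded there as lists of copies of a letter \<open>c\<close>.\<close>

definition walk_to_list :: "'a \<Rightarrow> nat \<times> nat \<Rightarrow> 'a list" where
  "walk_to_list c q = replicate (prod_encode q) c"

definition list_to_walk :: "'a list \<Rightarrow> nat \<times> nat" where
  "list_to_walk xs = prod_decode (length xs)"

interpretation walk_copy: retraction walks "walk_to_list c" list_to_walk for c
  by unfold_locales (simp add: walk_to_list_def list_to_walk_def)

lemma adequate_semigroup_walks: "adequate_semigroup walks walk_mult walk_plus walk_star"
  using adequate_monoid_walks by (simp add: adequate_monoid_def)

lemma not_fg_semigroup_if_hom_to_walk_copy:
  assumes "adequate_semigroup S m p st" and "c \<in> S"
    and hom: "adequate_hom S m p st (walk_to_list x ` walks) (walk_copy.copy_op x walk_mult)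
               (walk_copy.copy_un x walk_plus) (walk_copy.copy_un x walk_star) h"
    and "h c = walk_to_list x (1, 1)"
  shows "\<not> fg_semigroup S m"
proof (rule not_fg_semigroup_if_walk_hom[where \<phi> = "list_to_walk \<circ> h"])
  show "\<forall>a\<in>S. \<forall>b\<in>S. m a b \<in> S" "\<forall>a\<in>S. p a \<in> S"
    using assms(1) by (simp_all add: adequate_semigroup_def)
  show "\<forall>a\<in>S. \<forall>b\<in>S. (list_to_walk \<circ> h) (m a b) = walk_mult ((list_to_walk \<circ> h) a) ((list_to_walk \<circ> h) b)"
    "\<forall>a\<in>S. (list_to_walk \<circ> h) (p a) = walk_plus ((list_to_walk \<circ> h) a)"
    using walk_copy.d_hom_into_copy[OF adequate_semigroup_walks hom] by simp_all
  show "c \<in> S" by fact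
  show "(list_to_walk \<circ> h) c = (1, 1)"
    using \<open>h c = _\<close> by (simp add: walk_to_list_def list_to_walk_def)
qed

lemma adequate_monoid_walk_copy:
  "adequate_monoid (walk_to_list x ` walks) (walk_copy.copy_op x walk_mult)
     (walk_copy.copy_un x walk_plus) (walk_copy.copy_un x walk_star) (walk_to_list x (0, 0))"
  by (rule walk_copy.adequate_monoid_copy[OF adequate_monoid_walks])

lemma walk_to_list_one_one: "walk_to_list x (1, 1) \<in> walk_to_list x ` walks"
  by (auto simp: walks_def)

lemma free_adequate_semigroup_not_fg:
  assumes free: "free_adequate_semigroup \<Sigma> S m p st" and "c \<in> \<Sigma>"
  shows "\<not> fg_semigroup S m"
proof -
  have "adequate_semigroup (walk_to_list c ` walks) (walk_copy.copy_op c walk_mult)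
          (walk_copy.copy_un c walk_plus) (walk_copy.copy_un c walk_star)"
    using adequate_monoid_walk_copy[of c] by (simp add: adequate_monoid_def)
  moreover have "(\<lambda>_. walk_to_list c (1, 1)) ` \<Sigma> \<subseteq> walk_to_list c ` walks"
    by (rule image_subsetI) (rule walk_to_list_one_one)
  ultimately obtain h where
    hom: "adequate_hom S m p st (walk_to_list c ` walks) (walk_copy.copy_op c walk_mult)
      (walk_copy.copy_un c walk_plus) (walk_copy.copy_un c walk_star) h"
    and gen: "\<forall>x\<in>\<Sigma>. h x = walk_to_list c (1, 1)"
    using free unfolding free_adequate_semigroup_def by blast
  have "adequate_semigroup S m p st" "c \<in> S"
    using free \<open>c \<in> \<Sigma>\<close> by (auto simp: free_adequate_semigroup_def)
  moreover have "h c = walk_to_list c (1, 1)"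
    using gen \<open>c \<in> \<Sigma>\<close> by blast
  ultimately show ?thesis
    using hom by (intro not_fg_semigroup_if_hom_to_walk_copy)
qed

lemma free_adequate_monoid_not_fg:
  assumes free: "free_adequate_monoid \<Sigma> M m p st e" and "c \<in> \<Sigma>"
  shows "\<not> fg_monoid M m e"
proof -
  have "(\<lambda>_. walk_to_list c (1, 1)) ` \<Sigma> \<subseteq> walk_to_list c ` walks"
    by (rule image_subsetI) (rule walk_to_list_one_one)
  with adequate_monoid_walk_copy[of c] obtain h where
    hom: "adequate_monoid_hom M m p st e (walk_to_list c ` walks)
      (walk_copy.copy_op c walk_mult) (walk_copy.copy_un c walk_plus)
      (walk_copy.copy_un c walk_star) (walk_to_list c (0, 0)) h"
    and gen: "\<forall>x\<in>\<Sigma>. h x = walk_to_list c (1, 1)"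
    using free unfolding free_adequate_monoid_def by blast
  have "adequate_semigroup M m p st" "e \<in> M" "c \<in> M"
    using free \<open>c \<in> \<Sigma>\<close> by (auto simp: free_adequate_monoid_def adequate_monoid_def)
  moreover from hom have "adequate_hom M m p st (walk_to_list c ` walks)
      (walk_copy.copy_op c walk_mult) (walk_copy.copy_un c walk_plus)
      (walk_copy.copy_un c walk_star) h"
    by (simp add: adequate_monoid_hom_def)
  moreover have "h c = walk_to_list c (1, 1)"
    using gen \<open>c \<in> \<Sigma>\<close> by blast
  ultimately have "\<not> fg_semigroup M m"
    by (intro not_fg_semigroup_if_hom_to_walk_copy)
  then show ?thesis
    using fg_monoid_imp_fg_semigroup[OF \<open>e \<in> M\<close>] by blast
qed

theorem theorem7p3:
  fixes \<Sigma> :: "'a set"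
  assumes "\<Sigma> \<noteq> {}"
  shows "(\<forall>S m p st. free_adequate_semigroup \<Sigma> S m p st \<longrightarrow> \<not> fg_semigroup S m)
       \<and> (\<forall>M m p st e. free_adequate_monoid \<Sigma> M m p st e \<longrightarrow> \<not> fg_monoid M m e)"
proof -
  obtain c where "c \<in> \<Sigma>" using assms by blast
  then show ?thesis
    using free_adequate_semigroup_not_fg free_adequate_monoid_not_fg by (intro conjI allI impI)
qed

end
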